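(* For the space $\mathcal W$ defined below, $|\mathfrak P^\omega(\mathcal W)|=c$.
   Context: Identify $\mathbb R^2$ with $\mathbb C$. $\mathcal W=\{\tfrac1{2^{n+1}}e^{2\pi i\theta}+\tfrac1n+\tfrac{i}{2^{n+1}}:n\in\mathbb N,\theta\in[0,1]\}\cup[0,1]$, base point $0$. $c=|\mathbb R|$. An $\omega$-loop at $0$ is a continuous $k:[0,1]\to\mathcal W$ with $k(0)=k(1)=0$ all of whose fibres are finite; $\mathfrak P^\omega(\mathcal W)$ is the subgroup of $\pi_1(\mathcal W,0)$ generated by homotopy classes (rel endpoints) of $\omega$-loops at $0$. *)

theory Defs
  imports "HOL-Analysis.Analysis" "HOL-Library.Equipollence"
begin

text \<open>The space W: circles of radius 1/2^(n+1) tangent to the real axis at 1/n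
  (n = 1, 2, ...), together with the unit segment [0,1] on the real axis.\<close>
definition W :: "complex set" where
  "W = {complex_of_real (1 / 2 ^ (n + 1)) * exp (2 * of_real pi * \<i> * complex_of_real \<theta>)
          + complex_of_real (1 / real n) + \<i> * complex_of_real (1 / 2 ^ (n + 1))
        | n \<theta>. n \<ge> (1::nat) \<and> \<theta> \<in> {0..1::real}}
     \<union> complex_of_real ` {0..1}"

definition loop_at0 :: "(real \<Rightarrow> complex) \<Rightarrow> bool" where
  "loop_at0 k \<longleftrightarrow> path k \<and> path_image k \<subseteq> W \<and> pathstart k = 0 \<and> pathfinish k = 0"

definition omega_loop :: "(real \<Rightarrow> complex) \<Rightarrow> bool" where
  "omega_loop k \<longleftrightarrow> loop_at0 k \<and> (\<forall>x. finite {t \<in> {0..1}. k t = x})"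

definition hclass :: "(real \<Rightarrow> complex) \<Rightarrow> (real \<Rightarrow> complex) set" where
  "hclass p = {q. homotopic_paths W p q}"

text \<open>Representatives of the subgroup of pi_1(W,0) generated by the classes of omega-loops:
  closure of the omega-loops under identity, inverses (reversal) and products (concatenation).\<close>
inductive_set omega_words :: "(real \<Rightarrow> complex) set" where
  unit: "linepath 0 0 \<in> omega_words"
| gen: "omega_loop k \<Longrightarrow> k \<in> omega_words"
| inv: "p \<in> omega_words \<Longrightarrow> reversepath p \<in> omega_words"
| mult: "p \<in> omega_words \<Longrightarrow> q \<in> omega_words \<Longrightarrow> p +++ q \<in> omega_words"

definition P_omega :: "(real \<Rightarrow> complex) set set" where
  "P_omega = hclass ` omega_words"

end

theory Submission
  imports Defs "HOL-Complex_Analysis.Winding_Numbers"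
begin

text \<open>
  Upper bound: every class in the group is represented by a path in \<open>W\<close>, and a path is
  determined on \<open>[0,1]\<close> by its values at the dyadic rationals, so there are at most
  \<open>|\<complex>|\<^sup>\<aleph>\<^sub>0 = c\<close> classes.

  Lower bound: for \<open>S \<subseteq> {1,2,\<dots>}\<close> run from \<open>0\<close> to \<open>1\<close> along \<open>[0,1]\<close>, going once
  around the \<open>n\<close>-th circle on arrival at \<open>1/n\<close> exactly when \<open>n \<in> S\<close>, and return along
  \<open>[0,1]\<close>.  The pieces shrink to \<open>0\<close>, so this is a loop, and every point lies on only
  finitely many pieces, so it is an \<open>\<omega>\<close>-loop.  The centre of the \<open>n\<close>-th circle is not in
  \<open>W\<close>, and the loop winds once around it if \<open>n \<in> S\<close> and not at all otherwise (the rest of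
  the loop misses the vertical ray above the centre).  Hence the \<open>2\<^sup>\<aleph>\<^sub>0\<close> loops are
  pairwise non-homotopic in \<open>W\<close>.
\<close>

section \<open>Counting homotopy classes of paths\<close>

lemma continuous_on_eq_on_dyadics:
  fixes p q :: "real \<Rightarrow> 'a::real_normed_vector"
  assumes "continuous_on {0..1} p" "continuous_on {0..1} q"
    and "\<And>k i. real i / 2 ^ k \<in> {0..1} \<Longrightarrow> p (real i / 2 ^ k) = q (real i / 2 ^ k)"
    and "t \<in> {0..1}"
  shows "p t = q t"
proof -
  define D where "D = {0..1::real} \<inter> (\<Union>k i. {real i / 2 ^ k})"
  have closure_D: "closure D = {0..1}"
    unfolding D_def using closure_dyadic_rationals_in_convex_set_pos_1[of "{0..1::real}"] by simp
  have "(\<lambda>x. p x - q x) t = 0"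
  proof (rule continuous_constant_on_closure[of D "\<lambda>x. p x - q x"])
    show "continuous_on (closure D) (\<lambda>x. p x - q x)"
      unfolding closure_D using assms by (intro continuous_intros)
    show "p x - q x = 0" if "x \<in> D" for x
      using that assms(3) by (auto simp: D_def)
    show "t \<in> closure D"
      using assms(4) closure_D by simp
  qed
  then show ?thesis by simp
qed

lemma countable_funs_lepoll_nat_sets:
  assumes "(UNIV :: 'a set) \<lesssim> (UNIV :: nat set set)"
  shows "(UNIV :: ('i::countable \<Rightarrow> 'a) set) \<lesssim> (UNIV :: nat set set)"
proof -
  obtain e :: "'a \<Rightarrow> nat set" where e: "inj e"
    using assms unfolding lepoll_def by auto
  define code where "code f = {prod_encode (to_nat i, j) | i j. j \<in> e (f i)}" for f :: "'i \<Rightarrow> 'a"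
  have code_iff: "prod_encode (to_nat i, j) \<in> code f \<longleftrightarrow> j \<in> e (f i)" for f i j
    by (auto simp: code_def dest: injD[OF inj_prod_encode] injD[OF inj_to_nat])
  have "inj code"
  proof (rule injI)
    fix f g assume "code f = code g"
    then have "e (f i) = e (g i)" for i
      using code_iff[of i _ f] code_iff[of i _ g] by blast
    then show "f = g" using e by (simp add: fun_eq_iff inj_eq)
  qed
  then show ?thesis unfolding lepoll_def by blast
qed

lemma reals_lepoll_nat_sets: "(UNIV :: real set) \<lesssim> (UNIV :: nat set set)"
  using eqpoll_imp_lepoll eqpoll_sym nat_sets_eqpoll_reals by blast

lemma complex_lepoll_nat_sets: "(UNIV :: complex set) \<lesssim> (UNIV :: nat set set)"
proof -
  have "inj (\<lambda>z b. if b then Re z else Im z)"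
    by (rule injI) (metis complex_eqI)
  then have "(UNIV :: complex set) \<lesssim> (UNIV :: (bool \<Rightarrow> real) set)"
    unfolding lepoll_def by blast
  also have "\<dots> \<lesssim> (UNIV :: nat set set)"
    by (rule countable_funs_lepoll_nat_sets[OF reals_lepoll_nat_sets])
  finally show ?thesis .
qed

lemma homotopy_class_eq_if_eq_on_dyadics:
  fixes p q :: "real \<Rightarrow> 'a::real_normed_vector"
  assumes "path p" "path_image p \<subseteq> S" "path q"
    and "\<And>k i. p (real i / 2 ^ k) = q (real i / 2 ^ k)"
  shows "{r. homotopic_paths S p r} = {r. homotopic_paths S q r}"
proof -
  have "p t = q t" if "t \<in> {0..1}" for t
    by (rule continuous_on_eq_on_dyadics[of p q]) (use assms that in \<open>simp_all add: path_def\<close>)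
  then have "homotopic_paths S p q"
    using assms(1,2) by (intro homotopic_paths_eq) auto
  then show ?thesis
    by (blast intro: homotopic_paths_sym homotopic_paths_trans)
qed

lemma homotopy_classes_lepoll_reals:
  fixes S :: "complex set"
  shows "(\<lambda>p. {q. homotopic_paths S p q}) ` {p. path p \<and> path_image p \<subseteq> S} \<lesssim> (UNIV :: real set)"
proof -
  define paths where "paths = {p. path p \<and> path_image p \<subseteq> S}"
  define homclass where "homclass p = {q. homotopic_paths S p q}" for p
  define samples where "samples p = (\<lambda>(k, i). p (real i / 2 ^ k))" for p :: "real \<Rightarrow> complex"
  have class_eq: "homclass p = homclass q" if "p \<in> paths" "q \<in> paths" "samples p = samples q" for p q
  proof -
    have "p (real i / 2 ^ k) = q (real i / 2 ^ k)" for k i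
      using fun_cong[OF that(3), of "(k, i)"] by (simp add: samples_def)
    then show ?thesis
      using that(1,2) unfolding homclass_def paths_def by (intro homotopy_class_eq_if_eq_on_dyadics) auto
  qed
  have "homclass ` paths \<subseteq> (\<lambda>\<phi>. homclass (SOME p. p \<in> paths \<and> samples p = \<phi>)) ` UNIV"
  proof
    fix c assume "c \<in> homclass ` paths"
    then obtain p where p: "p \<in> paths" "c = homclass p" by blast
    then have "\<exists>q. q \<in> paths \<and> samples q = samples p" by blast
    then have "homclass (SOME q. q \<in> paths \<and> samples q = samples p) = homclass p"
      by (rule someI2_ex) (simp add: class_eq p(1))
    then show "c \<in> (\<lambda>\<phi>. homclass (SOME p. p \<in> paths \<and> samples p = \<phi>)) ` UNIV"
      by (intro image_eqI[where x = "samples p"]) (simp_all add: p(2))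
  qed
  then have "homclass ` paths \<lesssim> (UNIV :: (nat \<times> nat \<Rightarrow> complex) set)"
    by (rule subset_image_lepoll)
  also have "\<dots> \<lesssim> (UNIV :: nat set set)"
    by (rule countable_funs_lepoll_nat_sets[OF complex_lepoll_nat_sets])
  also have "\<dots> \<approx> (UNIV :: real set)"
    by (rule nat_sets_eqpoll_reals)
  finally show ?thesis unfolding homclass_def paths_def .
qed

lemma omega_words_loops:
  "p \<in> omega_words \<Longrightarrow> loop_at0 p"
proof (induction rule: omega_words.induct)
  case unit
  have "(0::complex) \<in> W" unfolding W_def by force
  then show ?case by (simp add: loop_at0_def path_def pathstart_def pathfinish_def)
next
  case (gen k) then show ?case by (simp add: omega_loop_def)
next
  case (inv p) then show ?case by (simp add: loop_at0_def path_image_reversepath)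
next
  case (mult p q) then show ?case by (simp add: loop_at0_def path_image_join)
qed

lemma P_omega_lepoll_reals: "P_omega \<lesssim> (UNIV :: real set)"
proof -
  have "P_omega \<subseteq> (\<lambda>p. {q. homotopic_paths W p q}) ` {p. path p \<and> path_image p \<subseteq> W}"
    unfolding P_omega_def hclass_def using omega_words_loops by (auto simp: loop_at0_def)
  then show ?thesis
    by (rule lepoll_trans[OF subset_imp_lepoll homotopy_classes_lepoll_reals])
qed

section \<open>Finite fibres and winding numbers\<close>

definition finite_fibres :: "(real \<Rightarrow> 'a) \<Rightarrow> bool" where
  "finite_fibres p \<longleftrightarrow> (\<forall>x. finite {t \<in> {0..1}. p t = x})"

lemma loop_free_imp_finite_fibres:
  assumes "loop_free p"
  shows "finite_fibres p"
  unfolding finite_fibres_def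
proof
  fix x
  show "finite {t \<in> {0..1}. p t = x}"
  proof (cases "\<exists>s\<in>{0..1}. p s = x")
    case True
    then obtain s where "s \<in> {0..1}" "p s = x" by blast
    then have "{t \<in> {0..1}. p t = x} \<subseteq> {s, 0, 1}"
      using assms unfolding loop_free_def by fastforce
    then show ?thesis by (rule finite_subset) simp
  next
    case False
    then have "{t \<in> {0..1}. p t = x} = {}" by blast
    then show ?thesis by (metis finite.emptyI)
  qed
qed

lemma finite_fibres_join:
  assumes "finite_fibres p" "finite_fibres q"
  shows "finite_fibres (p +++ q)"
  unfolding finite_fibres_def
proof
  fix x
  have sub: "{t \<in> {0..1}. (p +++ q) t = x}
        \<subseteq> (\<lambda>s. s / 2) ` {s \<in> {0..1}. p s = x} \<union> (\<lambda>s. (s + 1) / 2) ` {s \<in> {0..1}. q s = x}"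
  proof
    fix t assume t: "t \<in> {t \<in> {0..1}. (p +++ q) t = x}"
    show "t \<in> (\<lambda>s. s / 2) ` {s \<in> {0..1}. p s = x} \<union> (\<lambda>s. (s + 1) / 2) ` {s \<in> {0..1}. q s = x}"
    proof (cases "t \<le> 1/2")
      case True
      then show ?thesis
        using t by (auto simp: joinpaths_def intro!: image_eqI[where x = "2 * t"])
    next
      case False
      then show ?thesis
        using t by (auto simp: joinpaths_def intro!: image_eqI[where x = "2 * t - 1"])
    qed
  qed
  show "finite {t \<in> {0..1}. (p +++ q) t = x}"
    by (rule finite_subset[OF sub]) (use assms in \<open>simp add: finite_fibres_def\<close>)
qed

lemma winding_number_part_circlepath_centre:
  assumes "0 < r"
  shows "winding_number (part_circlepath z r s t) z = of_real ((t - s) / (2 * pi))"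
proof -
  define q where "q u = of_real (ln r) + \<i> * of_real (linepath s t u)" for u
  have "(\<lambda>u. part_circlepath z r s t u - z) = exp \<circ> q"
    using assms by (auto simp: part_circlepath_def q_def exp_add exp_of_real)
  moreover have "path q"
    unfolding q_def path_def by (intro continuous_intros)
  moreover have "pathfinish q - pathstart q = \<i> * of_real (t - s)"
    by (simp add: q_def pathstart_def pathfinish_def linepath_def algebra_simps)
  ultimately show ?thesis
    by (simp add: winding_number_offset[of _ z] winding_number_compose_exp)
qed

definition ray :: "complex \<Rightarrow> complex \<Rightarrow> complex set" where
  "ray z v = {z + of_real y * v | y. 0 \<le> y}"

lemma winding_number_zero_if_disjoint_ray:
  assumes "path g" "pathfinish g = pathstart g" "v \<noteq> 0" "path_image g \<inter> ray z v = {}"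
  shows "winding_number g z = 0"
proof (rule winding_number_zero_in_outside[OF assms(1,2)])
  show "z \<in> outside (path_image g)"
    unfolding outside_connected_component_lt
  proof clarify
    fix B :: real
    define R where "R = \<bar>B\<bar> + norm z + 1"
    define w where "w = z + (R / norm v) *\<^sub>R v"
    have "norm (w - z) = R"
      using assms(3) by (simp add: w_def R_def)
    then have "B < norm w"
      using norm_triangle_ineq4[of w z] by (simp add: R_def)
    moreover have "closed_segment z w \<subseteq> ray z v"
    proof
      fix u assume "u \<in> closed_segment z w"
      then obtain a :: real where "0 \<le> a" "a \<le> 1" "u = (1 - a) *\<^sub>R z + a *\<^sub>R w"
        unfolding closed_segment_def by blast
      then show "u \<in> ray z v"
        unfolding ray_def w_def
        by (intro CollectI exI[where x = "a * (R / norm v)"])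
          (auto simp: R_def scaleR_conv_of_real algebra_simps)
    qed
    then have "connected_component (- path_image g) z w"
      using assms(4) by (intro connected_componentI[of "closed_segment z w"]) auto
    ultimately show "\<exists>w. B < norm w \<and> connected_component (- path_image g) z w"
      by blast
  qed
qed

lemma winding_number_subpath_split:
  assumes "path g" "z \<notin> path_image g" "a \<in> {0..1}" "b \<in> {0..1}"
  shows "winding_number g z =
    winding_number (subpath 0 a g) z + winding_number (subpath a b g) z + winding_number (subpath b 1 g) z"
  using winding_number_subpath_combine[OF assms(1,2), of 0 a b]
    winding_number_subpath_combine[OF assms(1,2), of 0 b 1] assms(3,4)
  by simp

section \<open>Concatenating infinitely many shrinking paths\<close>

text \<open>The piece \<open>\<gamma> n\<close> is run, affinely reparametrised, on \<open>[1/(n+1), 1/n]\<close>: the pieces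
  follow each other in the order \<open>\<dots>, \<gamma> 3, \<gamma> 2, \<gamma> 1\<close> and accumulate at time \<open>0\<close>.\<close>

definition infinite_join :: "(nat \<Rightarrow> real \<Rightarrow> 'a::real_normed_vector) \<Rightarrow> real \<Rightarrow> 'a" where
  "infinite_join \<gamma> t =
     (if t \<le> 0 then 0 else let n = nat \<lfloor>1 / t\<rfloor> in \<gamma> n (real n * real (n + 1) * t - real n))"

lemma inverse_floor_bounds:
  assumes "0 < t" "t \<le> 1"
  shows "1 \<le> nat \<lfloor>1 / t\<rfloor>" "1 / real (nat \<lfloor>1 / t\<rfloor> + 1) < t" "t \<le> 1 / real (nat \<lfloor>1 / t\<rfloor>)"
proof -
  define n where "n = nat \<lfloor>1 / t\<rfloor>"
  have "1 \<le> 1 / t" using assms by simp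
  then have floor_pos: "1 \<le> \<lfloor>1 / t\<rfloor>" by (simp add: le_floor_iff)
  then have n: "real n = of_int \<lfloor>1 / t\<rfloor>"
    unfolding n_def by (intro of_nat_nat) linarith
  show "1 \<le> nat \<lfloor>1 / t\<rfloor>" using nat_mono[OF floor_pos] by simp
  have "1 / t < real n + 1" using n real_of_int_floor_add_one_gt[of "1 / t"] by simp
  then show "1 / real (nat \<lfloor>1 / t\<rfloor> + 1) < t"
    using assms unfolding n_def[symmetric] by (simp add: field_simps)
  have "real n \<le> 1 / t" using n of_int_floor_le[of "1 / t"] by simp
  then show "t \<le> 1 / real (nat \<lfloor>1 / t\<rfloor>)"
    using assms \<open>1 \<le> nat _\<close> unfolding n_def[symmetric] by (simp add: field_simps)
qed

lemma rescale_in_unit_interval: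
  assumes "1 \<le> n" "t \<in> {1 / real (n + 1) .. 1 / real n}"
  shows "real n * real (n + 1) * t - real n \<in> {0..1}"
proof -
  have "real n * real (n + 1) * (1 / real (n + 1)) \<le> real n * real (n + 1) * t"
    "real n * real (n + 1) * t \<le> real n * real (n + 1) * (1 / real n)"
    using assms(2) by (intro mult_left_mono; simp)+
  moreover have "real n * real (n + 1) * (1 / real (n + 1)) = real n"
    "real n * real (n + 1) * (1 / real n) = real n + 1"
    using assms(1) by simp_all
  ultimately show ?thesis by simp
qed

lemma infinite_join_cases:
  assumes "0 < t" "t \<le> 1"
  obtains n where "1 \<le> n" "1 / real (n + 1) < t" "t \<le> 1 / real n"
    "infinite_join \<gamma> t = \<gamma> n (real n * real (n + 1) * t - real n)"
  using inverse_floor_bounds[OF assms] assms by (simp add: infinite_join_def Let_def)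

lemma infinite_join_eq:
  assumes match: "\<And>n. 1 \<le> n \<Longrightarrow> pathfinish (\<gamma> (Suc n)) = pathstart (\<gamma> n)"
    and n: "1 \<le> n" and t: "t \<in> {1 / real (n + 1) .. 1 / real n}"
  shows "infinite_join \<gamma> t = \<gamma> n (real n * real (n + 1) * t - real n)"
proof (cases "t = 1 / real (n + 1)")
  case True
  then have "nat \<lfloor>1 / t\<rfloor> = Suc n" "real n * real (n + 1) * t - real n = 0"
    "real (Suc n) * real (Suc n + 1) * t - real (Suc n) = 1"
    by simp_all
  then show ?thesis
    using True match[OF n] by (simp add: infinite_join_def pathstart_def pathfinish_def)
next
  case False
  then have t_pos: "0 < t" and "1 / real (n + 1) < t" "t \<le> 1 / real n"
    using t by (auto intro: less_le_trans[of 0 "1 / real (n + 1)"])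
  then have "real n \<le> 1 / t" "1 / t < real n + 1"
    using n by (simp_all add: field_simps)
  then have "nat \<lfloor>1 / t\<rfloor> = n" by linarith
  then show ?thesis using t_pos by (simp add: infinite_join_def)
qed

lemma pathstart_infinite_join: "pathstart (infinite_join \<gamma>) = 0"
  by (simp add: pathstart_def infinite_join_def)

lemma pathfinish_infinite_join:
  assumes "\<And>n. 1 \<le> n \<Longrightarrow> pathfinish (\<gamma> (Suc n)) = pathstart (\<gamma> n)"
  shows "pathfinish (infinite_join \<gamma>) = pathfinish (\<gamma> 1)"
  using infinite_join_eq[of \<gamma> 1 1, OF assms] by (simp add: pathfinish_def)

lemma subpath_infinite_join:
  assumes "\<And>n. 1 \<le> n \<Longrightarrow> pathfinish (\<gamma> (Suc n)) = pathstart (\<gamma> n)"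
    and n: "1 \<le> n" and u: "u \<in> {0..1}"
  shows "subpath (1 / real (n + 1)) (1 / real n) (infinite_join \<gamma>) u = \<gamma> n u"
proof -
  define d where "d = 1 / real n - 1 / real (n + 1)"
  define t where "t = d * u + 1 / real (n + 1)"
  have "0 \<le> d" using n by (simp add: d_def frac_le)
  then have "0 \<le> d * u" "d * u \<le> d"
    using u mult_left_mono[of u 1 d] by simp_all
  then have "t \<in> {1 / real (n + 1) .. 1 / real n}"
    by (simp add: t_def d_def)
  moreover have "t = (u + real n) / (real n * real (n + 1))"
    using n by (simp add: t_def d_def field_simps add_nonneg_eq_0_iff)
  then have "real n * real (n + 1) * t - real n = u"
    using n by simp
  ultimately show ?thesis
    using infinite_join_eq[of \<gamma>, OF assms(1) n] by (simp add: subpath_def t_def d_def)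
qed

lemma infinite_join_norm_le:
  assumes small: "\<And>n u. 1 \<le> n \<Longrightarrow> u \<in> {0..1} \<Longrightarrow> norm (\<gamma> n u) \<le> c / real n"
    and t: "t \<in> {0..1}"
  shows "norm (infinite_join \<gamma> t) \<le> 2 * c * t"
proof (cases "t = 0")
  case True then show ?thesis by (simp add: infinite_join_def)
next
  case False
  then obtain n where n: "1 \<le> n" "1 / real (n + 1) < t" "t \<le> 1 / real n"
    and eq: "infinite_join \<gamma> t = \<gamma> n (real n * real (n + 1) * t - real n)"
    using t infinite_join_cases[of t] by auto
  have "0 \<le> c" using order_trans[OF norm_ge_zero small[of 1 0]] by simp
  have "norm (infinite_join \<gamma> t) \<le> c / real n"
    unfolding eq using n by (intro small rescale_in_unit_interval) auto
  also have "c / real n \<le> 2 * c * t"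
  proof -
    have "1 / real n \<le> 2 / real (n + 1)" using n(1) by (simp add: field_simps)
    moreover have "2 / real (n + 1) < 2 * t" using n(2) by simp
    ultimately have "1 / real n \<le> 2 * t" by linarith
    then show ?thesis using \<open>0 \<le> c\<close> mult_left_mono[of "1 / real n" "2 * t" c] by simp
  qed
  finally show ?thesis .
qed

lemma continuous_on_infinite_join_tail:
  assumes match: "\<And>n. 1 \<le> n \<Longrightarrow> pathfinish (\<gamma> (Suc n)) = pathstart (\<gamma> n)"
    and paths: "\<And>n. 1 \<le> n \<Longrightarrow> path (\<gamma> n)"
  shows "continuous_on {1 / real (Suc M) .. 1} (infinite_join \<gamma>)"
proof (induction M)
  case 0 then show ?case by simp
next
  case (Suc M)
  let ?n = "Suc M"
  have "continuous_on {1 / real (?n + 1) .. 1 / real ?n} (\<lambda>t. \<gamma> ?n (real ?n * real (?n + 1) * t - real ?n))"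
  proof (rule continuous_on_compose2[of "{0..1}" "\<gamma> ?n"])
    show "continuous_on {0..1} (\<gamma> ?n)" using paths[of ?n] by (simp add: path_def)
    show "(\<lambda>t. real ?n * real (?n + 1) * t - real ?n) ` {1 / real (?n + 1) .. 1 / real ?n} \<subseteq> {0..1}"
      by (rule image_subsetI, rule rescale_in_unit_interval) simp_all
  qed (intro continuous_intros)
  then have "continuous_on {1 / real (?n + 1) .. 1 / real ?n} (infinite_join \<gamma>)"
    by (rule continuous_on_eq) (simp add: infinite_join_eq[of \<gamma>, OF match, of ?n])
  moreover have "{1 / real (?n + 1) .. 1} = {1 / real (?n + 1) .. 1 / real ?n} \<union> {1 / real ?n .. 1}"
    by (rule ivl_disj_un_two_touch(4)[symmetric]) (simp_all add: frac_le)
  ultimately show ?case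
    using Suc.IH by (simp add: continuous_on_closed_Un)
qed

lemma path_infinite_join:
  assumes match: "\<And>n. 1 \<le> n \<Longrightarrow> pathfinish (\<gamma> (Suc n)) = pathstart (\<gamma> n)"
    and paths: "\<And>n. 1 \<le> n \<Longrightarrow> path (\<gamma> n)"
    and small: "\<And>n u. 1 \<le> n \<Longrightarrow> u \<in> {0..1} \<Longrightarrow> norm (\<gamma> n u) \<le> c / real n"
  shows "path (infinite_join \<gamma>)"
  unfolding path_def continuous_on_eq_continuous_within
proof
  fix x :: real assume x: "x \<in> {0..1}"
  show "continuous (at x within {0..1}) (infinite_join \<gamma>)"
  proof (cases "x = 0")
    case True
    have "(infinite_join \<gamma> \<longlongrightarrow> 0) (at 0 within {0..1})"
    proof (rule Lim_null_comparison)
      show "\<forall>\<^sub>F t in at 0 within {0..1}. norm (infinite_join \<gamma> t) \<le> 2 * c * t"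
        using infinite_join_norm_le[of \<gamma> c, OF small]
        by (auto simp: eventually_at_filter intro!: always_eventually)
      show "((\<lambda>t. 2 * c * t) \<longlongrightarrow> 0) (at (0::real) within {0..1})"
        by (auto intro!: tendsto_eq_intros)
    qed
    then show ?thesis
      using True by (simp add: continuous_within infinite_join_def)
  next
    case False
    then have "0 < x" using x by simp
    obtain M :: nat where "1 / x < real M" using reals_Archimedean2 by blast
    then have M: "1 / real (Suc M) < x" using \<open>0 < x\<close> by (simp add: field_simps)
    have "continuous (at x within {1 / real (Suc M) .. 1}) (infinite_join \<gamma>)"
      using continuous_on_infinite_join_tail[of \<gamma>, OF match paths, of M] x M
      by (simp add: continuous_on_eq_continuous_within)
    moreover have "at x within {0..1} = at x within {1 / real (Suc M) .. 1}"
    proof (rule at_within_nhd[where S = "{1 / real (Suc M) <..}"])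
      have "{0..1} \<inter> {a<..} = {a..1} \<inter> {a<..}" if "0 \<le> a" for a :: real
        using that by auto
      then show "{0..1} \<inter> {1 / real (Suc M)<..} - {x} = {1 / real (Suc M)..1} \<inter> {1 / real (Suc M)<..} - {x}"
        by simp
    qed (use M in auto)
    ultimately show ?thesis by (simp add: continuous_within)
  qed
qed

lemma infinite_join_image:
  "infinite_join \<gamma> ` {0..1} \<subseteq> insert 0 (\<Union>n\<in>{1..}. path_image (\<gamma> n))"
proof
  fix x assume "x \<in> infinite_join \<gamma> ` {0..1}"
  then obtain t where t: "t \<in> {0..1}" "x = infinite_join \<gamma> t" by blast
  show "x \<in> insert 0 (\<Union>n\<in>{1..}. path_image (\<gamma> n))"
  proof (cases "t = 0")
    case True then show ?thesis using t by (simp add: infinite_join_def)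
  next
    case False
    then obtain n where "1 \<le> n" "1 / real (n + 1) < t" "t \<le> 1 / real n"
      and "x = \<gamma> n (real n * real (n + 1) * t - real n)"
      using t infinite_join_cases[of t] by auto
    then have "x \<in> path_image (\<gamma> n)"
      using rescale_in_unit_interval[of n t] by (auto simp: path_image_def)
    then show ?thesis using \<open>1 \<le> n\<close> by auto
  qed
qed

lemma infinite_join_outside_piece:
  assumes m: "1 \<le> m" and t: "t \<in> {0..1}" "t \<notin> {1 / real (m + 1) <..< 1 / real m}"
  shows "infinite_join \<gamma> t \<in> insert 0 (insert (pathfinish (\<gamma> m)) (\<Union>n\<in>{1..} - {m}. path_image (\<gamma> n)))"
proof (cases "t = 0")
  case True then show ?thesis by (simp add: infinite_join_def)
next
  case False
  then obtain n where n: "1 \<le> n" "1 / real (n + 1) < t" "t \<le> 1 / real n"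
    and eq: "infinite_join \<gamma> t = \<gamma> n (real n * real (n + 1) * t - real n)"
    using t infinite_join_cases[of t] by auto
  show ?thesis
  proof (cases "n = m")
    case True
    then have "t = 1 / real m" using n t by auto
    then have "infinite_join \<gamma> t = pathfinish (\<gamma> m)"
      using eq m \<open>n = m\<close> by (simp add: pathfinish_def)
    then show ?thesis by simp
  next
    case False
    then have "infinite_join \<gamma> t \<in> path_image (\<gamma> n)"
      unfolding eq path_image_def using n rescale_in_unit_interval[of n t] by auto
    then show ?thesis using n(1) False by blast
  qed
qed

lemma finite_fibres_infinite_join:
  assumes fibres: "\<And>n. 1 \<le> n \<Longrightarrow> finite_fibres (\<gamma> n)"
    and nonzero: "\<And>n u. 1 \<le> n \<Longrightarrow> u \<in> {0..1} \<Longrightarrow> \<gamma> n u \<noteq> 0"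
    and small: "\<And>n u. 1 \<le> n \<Longrightarrow> u \<in> {0..1} \<Longrightarrow> norm (\<gamma> n u) \<le> c / real n"
  shows "finite_fibres (infinite_join \<gamma>)"
  unfolding finite_fibres_def
proof
  fix x :: 'a
  define N where "N = nat \<lceil>c / norm x\<rceil>"
  have sub: "{t \<in> {0..1}. infinite_join \<gamma> t = x} \<subseteq>
    insert 0 (\<Union>n\<in>{1..N}. (\<lambda>u. (u + real n) / (real n * real (n + 1))) ` {u \<in> {0..1}. \<gamma> n u = x})"
  proof
    fix t assume t: "t \<in> {t \<in> {0..1}. infinite_join \<gamma> t = x}"
    show "t \<in> insert 0 (\<Union>n\<in>{1..N}. (\<lambda>u. (u + real n) / (real n * real (n + 1))) ` {u \<in> {0..1}. \<gamma> n u = x})"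
    proof (cases "t = 0")
      case False
      then obtain n where n: "1 \<le> n" "1 / real (n + 1) < t" "t \<le> 1 / real n"
        and eq: "infinite_join \<gamma> t = \<gamma> n (real n * real (n + 1) * t - real n)"
        using t infinite_join_cases[of t] by auto
      define u where "u = real n * real (n + 1) * t - real n"
      have u: "u \<in> {0..1}" "\<gamma> n u = x"
        using rescale_in_unit_interval[of n t] n t eq by (auto simp: u_def)
      then have "x \<noteq> 0" using nonzero n(1) by blast
      have "norm x \<le> c / real n" using small[OF n(1) u(1)] u(2) by simp
      then have "real n \<le> c / norm x"
        using n(1) \<open>x \<noteq> 0\<close> by (simp add: field_simps)
      then have "n \<in> {1..N}" using n(1) by (simp add: N_def le_nat_iff le_ceiling_iff)
      moreover have "u + real n = real n * real (n + 1) * t"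
        by (simp add: u_def)
      then have "t = (u + real n) / (real n * real (n + 1))"
        using n(1) by (simp add: eq_divide_eq)
      ultimately show ?thesis using u by blast
    qed simp
  qed
  show "finite {t \<in> {0..1}. infinite_join \<gamma> t = x}"
    by (rule finite_subset[OF sub]) (use fibres in \<open>auto simp: finite_fibres_def\<close>)
qed

section \<open>The circles of \<open>W\<close>\<close>

lemma times_Suc_less_two_power: "n * Suc n < 2 ^ Suc n"
proof (induction n)
  case 0 then show ?case by simp
next
  case (Suc n)
  have "n + 1 \<le> 2 ^ n" using less_exp[of n] by linarith
  then have "Suc n * Suc (Suc n) = n * Suc n + 2 * (n + 1)" "2 * (n + 1) \<le> 2 ^ Suc n"
    by simp_all
  then show ?case using Suc.IH by simp
qed

definition radius :: "nat \<Rightarrow> real" where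
  "radius n = 1 / 2 ^ (n + 1)"

definition centre :: "nat \<Rightarrow> complex" where
  "centre n = of_real (1 / real n) + \<i> * of_real (radius n)"

lemma radius_pos: "0 < radius n"
  by (simp add: radius_def)

lemma radius_less_gap:
  assumes "1 \<le> n"
  shows "radius n < 1 / real n - 1 / real (n + 1)"
proof -
  have "real (n * Suc n) < real (2 ^ Suc n)"
    using times_Suc_less_two_power[of n] by (simp only: of_nat_less_iff)
  then have "real n * real (n + 1) < 2 ^ (n + 1)" by (simp add: algebra_simps)
  moreover have "0 < real n * real (n + 1)" using assms by simp
  ultimately have "radius n < 1 / (real n * real (n + 1))"
    unfolding radius_def using assms by (intro divide_strict_left_mono mult_pos_pos) simp_all
  also have "\<dots> = 1 / real n - 1 / real (n + 1)"
    using assms by (simp add: field_simps)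
  finally show ?thesis .
qed

lemma radius_less_dist:
  assumes "1 \<le> n" "1 \<le> m" "n \<noteq> m"
  shows "radius n < \<bar>1 / real n - 1 / real m\<bar>"
proof (cases "n < m")
  case True
  have "1 / real m \<le> 1 / real (n + 1)" using True assms by (simp add: frac_le)
  then show ?thesis using radius_less_gap[OF assms(1)] by simp
next
  case False
  then have "m < n" using assms(3) by simp
  have "1 / real n \<le> 1 / real (m + 1)" using \<open>m < n\<close> assms by (simp add: frac_le)
  moreover have "radius n \<le> radius m"
    unfolding radius_def using \<open>m < n\<close> by (intro divide_left_mono) auto
  ultimately show ?thesis using radius_less_gap[OF assms(2)] by simp
qed

lemma Re_sphere_centre:
  assumes "z \<in> sphere (centre n) (radius n)"
  shows "\<bar>Re z - 1 / real n\<bar> \<le> radius n"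
proof -
  have "\<bar>Re (z - centre n)\<bar> \<le> radius n"
    using assms abs_Re_le_cmod[of "z - centre n"] by (simp add: dist_norm norm_minus_commute)
  then show ?thesis by (simp add: centre_def)
qed

definition W_part :: "nat set \<Rightarrow> complex set" where
  "W_part T = of_real ` {0..1} \<union> (\<Union>n\<in>T. sphere (centre n) (radius n))"

lemma W_part_mono: "A \<subseteq> B \<Longrightarrow> W_part A \<subseteq> W_part B"
  unfolding W_part_def by blast

lemma W_eq_W_part: "W = W_part {1..}"
proof -
  have circle: "complex_of_real (1 / 2 ^ (n + 1)) * exp (2 * of_real pi * \<i> * complex_of_real \<theta>)
      + complex_of_real (1 / real n) + \<i> * complex_of_real (1 / 2 ^ (n + 1))
      = centre n + of_real (radius n) * exp (2 * of_real pi * \<i> * of_real \<theta>)" for n \<theta>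
    by (simp add: centre_def radius_def)
  have "w \<in> sphere (centre n) (radius n) \<longleftrightarrow>
      (\<exists>\<theta>\<in>{0..1}. w = centre n + of_real (radius n) * exp (2 * of_real pi * \<i> * of_real \<theta>))" for w n
  proof
    assume "w \<in> sphere (centre n) (radius n)"
    then have "norm ((w - centre n) / of_real (radius n)) = 1"
      using radius_pos[of n] by (simp add: dist_norm norm_divide norm_minus_commute)
    then obtain t where t: "0 \<le> t" "t < 2 * pi" "(w - centre n) / of_real (radius n) = Complex (cos t) (sin t)"
      by (rule complex_unimodular_polar)
    have "Complex (cos t) (sin t) = exp (2 * of_real pi * \<i> * of_real (t / (2 * pi)))"
      by (simp add: exp_Euler complex_eq_iff cos_of_real sin_of_real)
    then show "\<exists>\<theta>\<in>{0..1}. w = centre n + of_real (radius n) * exp (2 * of_real pi * \<i> * of_real \<theta>)"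
      using t radius_pos[of n] by (intro bexI[where x = "t / (2 * pi)"]) (auto simp: field_simps)
  next
    assume "\<exists>\<theta>\<in>{0..1}. w = centre n + of_real (radius n) * exp (2 * of_real pi * \<i> * of_real \<theta>)"
    then show "w \<in> sphere (centre n) (radius n)"
      using radius_pos[of n] by (auto simp: dist_norm norm_mult)
  qed
  then show ?thesis
    unfolding W_def W_part_def circle by fastforce
qed

lemma ray_centre_disjoint_W_part:
  assumes "1 \<le> m" "m \<notin> T" "T \<subseteq> {1..}"
  shows "ray (centre m) \<i> \<inter> W_part T = {}"
proof -
  have "z \<notin> W_part T" if "z \<in> ray (centre m) \<i>" for z
  proof
    assume "z \<in> W_part T"
    obtain y where y: "0 \<le> y" "z = centre m + of_real y * \<i>"
      using \<open>z \<in> ray _ _\<close> unfolding ray_def by blast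
    then have z: "Re z = 1 / real m" "0 < Im z"
      using radius_pos[of m] by (simp_all add: centre_def)
    then obtain n where "n \<in> T" "z \<in> sphere (centre n) (radius n)"
      using \<open>z \<in> W_part T\<close> unfolding W_part_def by auto
    moreover have "n \<noteq> m" "1 \<le> n" using \<open>n \<in> T\<close> assms by auto
    ultimately show False
      using Re_sphere_centre[of z n] radius_less_dist[of n m] assms(1) z(1) by simp
  qed
  then show ?thesis by blast
qed

lemma centre_notin_W:
  assumes "1 \<le> m"
  shows "centre m \<notin> W"
proof -
  have "W = W_part ({1..} - {m}) \<union> sphere (centre m) (radius m)"
    unfolding W_eq_W_part W_part_def using assms by auto
  moreover have "centre m \<in> ray (centre m) \<i>"
    unfolding ray_def by force
  ultimately show ?thesis
    using ray_centre_disjoint_W_part[of m "{1..} - {m}"] assms radius_pos[of m] by auto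
qed

lemma W_part_subset_W: "T \<subseteq> {1..} \<Longrightarrow> W_part T \<subseteq> W"
  unfolding W_eq_W_part by (rule W_part_mono)

lemma closed_segment_one_zero: "closed_segment 1 0 \<subseteq> complex_of_real ` {0..1}"
proof
  fix z :: complex assume "z \<in> closed_segment 1 0"
  then obtain u :: real where "u \<in> {0..1}" "z = of_real (1 - u)"
    unfolding closed_segment_def by (auto simp: scaleR_conv_of_real)
  moreover have "1 - u \<in> {0..1}" using \<open>u \<in> {0..1}\<close> by simp
  ultimately show "z \<in> of_real ` {0..1}" by blast
qed

definition hoop :: "nat \<Rightarrow> real \<Rightarrow> complex" where
  "hoop n = part_circlepath (centre n) (radius n) (- pi / 2) (3 * pi / 2)"

lemma pathstart_hoop [simp]: "pathstart (hoop n) = of_real (1 / real n)"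
  and pathfinish_hoop [simp]: "pathfinish (hoop n) = of_real (1 / real n)"
proof -
  have bottom: "exp (\<i> * complex_of_real (- pi / 2)) = - \<i>"
    by (simp add: exp_Euler cos_of_real sin_of_real flip: of_real_minus of_real_divide of_real_mult)
      (simp add: of_real_minus)
  have "\<i> * complex_of_real (3 * pi / 2) = \<i> * complex_of_real (- pi / 2) + 2 * of_real pi * \<i>"
    by (simp add: algebra_simps)
  then have "exp (\<i> * complex_of_real (3 * pi / 2)) = - \<i>"
    by (simp only: exp_add exp_two_pi_i bottom) simp
  with bottom show "pathstart (hoop n) = of_real (1 / real n)" "pathfinish (hoop n) = of_real (1 / real n)"
    by (simp_all add: hoop_def centre_def)
qed

lemma path_hoop [simp]: "path (hoop n)"
  by (simp add: hoop_def)

lemma path_image_hoop: "path_image (hoop n) \<subseteq> sphere (centre n) (radius n)"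
  unfolding hoop_def using radius_pos[of n] by (simp add: path_image_part_circlepath_subset')

lemma winding_number_hoop: "winding_number (hoop n) (centre n) = 1"
  unfolding hoop_def using radius_pos[of n]
  by (simp add: winding_number_part_circlepath_centre)

lemma finite_fibres_hoop: "finite_fibres (hoop n)"
proof -
  have "simple_path (hoop n)"
    unfolding hoop_def simple_path_part_circlepath using radius_pos[of n] by simp
  then show ?thesis by (simp add: simple_path_def loop_free_imp_finite_fibres)
qed

definition gap :: "nat \<Rightarrow> real \<Rightarrow> complex" where
  "gap n = linepath (of_real (1 / real (n + 1))) (of_real (1 / real n))"

lemma pathstart_gap [simp]: "pathstart (gap n) = of_real (1 / real (n + 1))"
  and pathfinish_gap [simp]: "pathfinish (gap n) = of_real (1 / real n)"
  by (simp_all add: gap_def)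

lemma path_gap [simp]: "path (gap n)"
  by (simp add: gap_def)

lemma path_image_gap:
  assumes "1 \<le> n"
  shows "path_image (gap n) = of_real ` {1 / real (n + 1) .. 1 / real n}"
proof -
  have "gap n = complex_of_real \<circ> linepath (1 / real (n + 1)) (1 / real n)"
    by (simp add: gap_def fun_eq_iff of_real_linepath)
  moreover have "1 / real (n + 1) \<le> 1 / real n"
    using assms by (simp add: frac_le)
  ultimately show ?thesis
    by (simp add: path_image_compose closed_segment_eq_real_ivl)
qed

lemma path_image_gap_real:
  assumes "1 \<le> n"
  shows "path_image (gap n) \<subseteq> of_real ` {0..1}"
proof -
  have "{1 / real (n + 1) .. 1 / real n} \<subseteq> {0..1}"
    using assms by auto
  then show ?thesis unfolding path_image_gap[OF assms] by (rule image_mono)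
qed

lemma finite_fibres_gap:
  assumes "1 \<le> n"
  shows "finite_fibres (gap n)"
proof -
  have "simple_path (gap n)"
    unfolding gap_def using assms by (intro simple_path_linepath) simp
  then show ?thesis by (simp add: simple_path_def loop_free_imp_finite_fibres)
qed

definition piece :: "nat set \<Rightarrow> nat \<Rightarrow> real \<Rightarrow> complex" where
  "piece S n = (if n \<in> S then gap n +++ hoop n else gap n)"

lemma pathstart_piece [simp]: "pathstart (piece S n) = of_real (1 / real (n + 1))"
  and pathfinish_piece [simp]: "pathfinish (piece S n) = of_real (1 / real n)"
  by (simp_all add: piece_def)

lemma path_piece: "path (piece S n)"
  by (simp add: piece_def)

lemma finite_fibres_piece: "1 \<le> n \<Longrightarrow> finite_fibres (piece S n)"
  by (simp add: piece_def finite_fibres_join finite_fibres_gap finite_fibres_hoop)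

lemma path_image_piece:
  assumes "1 \<le> n"
  shows "path_image (piece S n) \<subseteq> of_real ` {1 / real (n + 1) .. 1 / real n}
     \<union> (if n \<in> S then sphere (centre n) (radius n) else {})"
  using path_image_gap[OF assms] path_image_hoop[of n]
  by (auto simp: piece_def path_image_join)

lemma path_image_piece_W_part:
  assumes "1 \<le> n"
  shows "path_image (piece S n) \<subseteq> W_part (S \<inter> {n})"
  using path_image_gap_real[OF assms] path_image_hoop[of n]
  by (auto simp: piece_def path_image_join W_part_def)

lemma piece_bounds:
  assumes n: "1 \<le> n" and u: "u \<in> {0..1}"
  shows "0 < Re (piece S n u)" "norm (piece S n u) \<le> 3 / real n"
proof -
  define z where "z = piece S n u"
  have small_radius: "radius n < 1 / real n - 1 / real (n + 1)" by (rule radius_less_gap[OF n])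
  have "z \<in> path_image (piece S n)" using u by (simp add: z_def path_image_def)
  then consider (real) x where "z = of_real x" "1 / real (n + 1) \<le> x" "x \<le> 1 / real n"
    | (circle) "z \<in> sphere (centre n) (radius n)"
    using path_image_piece[OF n, of S] by (auto split: if_splits)
  then have "0 < Re z \<and> norm z \<le> 3 / real n"
  proof cases
    case real
    have "0 < x" using real(2) by (auto intro: less_le_trans[of 0 "1 / real (n + 1)"])
    moreover have "1 / real n \<le> 3 / real n" by (simp add: divide_right_mono)
    ultimately show ?thesis using real by simp
  next
    case circle
    have "norm (centre n) \<le> 1 / real n + radius n"
      unfolding centre_def using norm_triangle_ineq[of "of_real (1 / real n)" "\<i> * of_real (radius n)"]
        radius_pos[of n] by (simp add: norm_mult norm_divide)
    moreover have "norm z \<le> norm (centre n) + radius n"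
      using circle norm_triangle_ineq2[of z "centre n"] by (simp add: dist_norm norm_minus_commute)
    moreover have "0 \<le> 1 / real (n + 1)" "3 / real n = 3 * (1 / real n)" by simp_all
    ultimately show ?thesis
      using Re_sphere_centre[OF circle] small_radius by linarith
  qed
  then show "0 < Re (piece S n u)" "norm (piece S n u) \<le> 3 / real n"
    by (simp_all add: z_def)
qed

section \<open>Loops around prescribed circles\<close>

definition circles_path :: "nat set \<Rightarrow> real \<Rightarrow> complex" where
  "circles_path S = infinite_join (piece S)"

definition circles_loop :: "nat set \<Rightarrow> real \<Rightarrow> complex" where
  "circles_loop S = circles_path S +++ linepath 1 0"

lemma path_circles_path: "path (circles_path S)"
  unfolding circles_path_def
  by (rule path_infinite_join[of _ 3]) (simp_all add: path_piece piece_bounds(2))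

lemma pathstart_circles_path [simp]: "pathstart (circles_path S) = 0"
  by (simp add: circles_path_def pathstart_infinite_join)

lemma pathfinish_circles_path [simp]: "pathfinish (circles_path S) = 1"
  unfolding circles_path_def by (subst pathfinish_infinite_join) simp_all

lemma path_image_circles_path: "path_image (circles_path S) \<subseteq> W_part (S \<inter> {1..})"
proof -
  have "0 \<in> W_part (S \<inter> {1..})" unfolding W_part_def by force
  moreover have "path_image (piece S n) \<subseteq> W_part (S \<inter> {1..})" if "1 \<le> n" for n
    using path_image_piece_W_part[OF that] W_part_mono[of "S \<inter> {n}" "S \<inter> {1..}"] that by auto
  ultimately have "insert 0 (\<Union>n\<in>{1..}. path_image (piece S n)) \<subseteq> W_part (S \<inter> {1..})"
    by blast
  moreover have "path_image (circles_path S) = infinite_join (piece S) ` {0..1}"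
    by (simp add: circles_path_def path_image_def)
  ultimately show ?thesis
    using infinite_join_image[of "piece S"] by blast
qed

lemma circles_path_outside_piece:
  assumes m: "1 \<le> m" and t: "t \<in> {0..1}" "t \<notin> {1 / real (m + 1) <..< 1 / real m}"
  shows "circles_path S t \<in> W_part (S \<inter> {1..} - {m})"
proof -
  have real: "of_real ` {0..1} \<subseteq> W_part (S \<inter> {1..} - {m})"
    unfolding W_part_def by blast
  have zero: "complex_of_real 0 \<in> W_part (S \<inter> {1..} - {m})"
    by (rule subsetD[OF real imageI]) simp
  have finish: "complex_of_real (1 / real m) \<in> W_part (S \<inter> {1..} - {m})"
    by (rule subsetD[OF real imageI]) (use m in simp)
  have others: "path_image (piece S n) \<subseteq> W_part (S \<inter> {1..} - {m})" if "n \<in> {1..} - {m}" for n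
  proof -
    have "W_part (S \<inter> {n}) \<subseteq> W_part (S \<inter> {1..} - {m})"
      using that by (intro W_part_mono) auto
    then show ?thesis using path_image_piece_W_part[of n S] that by auto
  qed
  from infinite_join_outside_piece[OF m t, of "piece S"]
  consider "circles_path S t = 0" | "circles_path S t = pathfinish (piece S m)"
    | n where "n \<in> {1..} - {m}" "circles_path S t \<in> path_image (piece S n)"
    unfolding circles_path_def by blast
  then show ?thesis
    by cases (use zero finish others in auto)
qed

lemma subpath_circles_path:
  assumes "1 \<le> m" "u \<in> {0..1}"
  shows "subpath (1 / real (m + 1)) (1 / real m) (circles_path S) u = piece S m u"
  unfolding circles_path_def by (rule subpath_infinite_join[OF _ assms]) simp

lemma finite_fibres_circles_path: "finite_fibres (circles_path S)"
  unfolding circles_path_def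
proof (rule finite_fibres_infinite_join[of _ 3])
  fix n :: nat and u :: real assume "1 \<le> n" "u \<in> {0..1}"
  then show "piece S n u \<noteq> 0" "norm (piece S n u) \<le> 3 / real n"
    using piece_bounds[of n u S] by auto
qed (rule finite_fibres_piece)

lemma path_image_circles_loop: "path_image (circles_loop S) \<subseteq> W_part (S \<inter> {1..})"
  using path_image_circles_path[of S] closed_segment_one_zero
  by (auto simp: circles_loop_def path_image_join W_part_def)

lemma loop_circles_loop: "loop_at0 (circles_loop S)"
  using path_circles_path[of S] path_image_circles_loop[of S] W_part_subset_W[of "S \<inter> {1..}"]
  by (auto simp: loop_at0_def circles_loop_def)

lemma omega_loop_circles_loop: "omega_loop (circles_loop S)"
proof -
  have "simple_path (linepath (1::complex) 0)" by (rule simple_path_linepath) simp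
  then have "finite_fibres (linepath (1::complex) 0)"
    by (simp add: simple_path_def loop_free_imp_finite_fibres)
  then have "finite_fibres (circles_loop S)"
    by (simp add: circles_loop_def finite_fibres_join finite_fibres_circles_path)
  then show ?thesis
    using loop_circles_loop by (simp add: omega_loop_def finite_fibres_def)
qed

lemma winding_number_circles_loop_notin:
  assumes m: "1 \<le> m" and "m \<notin> S"
  shows "winding_number (circles_loop S) (centre m) = 0"
proof (rule winding_number_zero_if_disjoint_ray)
  show "path (circles_loop S)" by (simp add: circles_loop_def path_circles_path)
  show "pathfinish (circles_loop S) = pathstart (circles_loop S)" by (simp add: circles_loop_def)
  show "path_image (circles_loop S) \<inter> ray (centre m) \<i> = {}"
    using path_image_circles_loop[of S] ray_centre_disjoint_W_part[OF m, of "S \<inter> {1..}"] \<open>m \<notin> S\<close>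
    by auto
qed simp

text \<open>The loop with the \<open>m\<close>-th piece replaced by the segment \<open>gap m\<close> misses the ray above
  \<open>centre m\<close>.\<close>

lemma winding_number_circles_loop_without_hoop:
  fixes S :: "nat set"
  assumes m: "1 \<le> m"
  defines "head \<equiv> subpath 0 (1 / real (m + 1)) (circles_path S)"
    and "tail \<equiv> subpath (1 / real m) 1 (circles_path S)"
  shows "winding_number head (centre m) + winding_number (gap m) (centre m)
    + winding_number tail (centre m) + winding_number (linepath 1 0) (centre m) = 0"
proof -
  define a b where "a = 1 / real (m + 1)" and "b = 1 / real m"
  define rest where "rest = head +++ gap m +++ tail +++ linepath 1 0"
  let ?z = "centre m" and ?V = "W_part (S \<inter> {1..} - {m})"
  have ab: "a \<in> {0..1}" "b \<in> {0..1}" "a \<le> b"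
    using m by (auto simp: a_def b_def frac_le)
  have "circles_path S t \<in> ?V" if "t \<in> {0..a} \<union> {b..1}" for t
    using that ab by (intro circles_path_outside_piece[OF m, folded a_def b_def]) auto
  then have images: "path_image head \<subseteq> ?V" "path_image tail \<subseteq> ?V"
    using ab unfolding head_def tail_def a_def[symmetric] b_def[symmetric]
    by (auto simp: path_image_subpath)
  have paths: "path head" "path tail"
    using path_circles_path ab unfolding head_def tail_def a_def[symmetric] b_def[symmetric] by auto
  have ends: "pathstart head = 0" "pathfinish head = pathstart (gap m)"
    "pathstart tail = pathfinish (gap m)" "pathfinish tail = 1"
    using subpath_circles_path[OF m, of 0 S] subpath_circles_path[OF m, of 1 S]
      pathstart_piece[of S m] pathfinish_piece[of S m] pathstart_gap[of m] pathfinish_gap[of m]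
      pathstart_circles_path[of S] pathfinish_circles_path[of S]
    by (simp_all add: head_def tail_def subpath_def pathstart_def pathfinish_def)
  have "path_image (gap m) \<union> path_image (linepath (1::complex) 0) \<subseteq> ?V"
    using path_image_gap_real[OF m] closed_segment_one_zero unfolding W_part_def by auto
  then have "path_image rest \<subseteq> ?V"
    using images ends by (auto simp: rest_def path_image_join)
  then have "winding_number rest ?z = 0"
    using ray_centre_disjoint_W_part[OF m, of "S \<inter> {1..} - {m}"] paths ends
    by (intro winding_number_zero_if_disjoint_ray[where v = \<i>]) (auto simp: rest_def)
  moreover have "?V \<subseteq> W" by (rule W_part_subset_W) auto
  then have "?z \<notin> path_image head" "?z \<notin> path_image tail" "?z \<notin> path_image (gap m)"
    "?z \<notin> path_image (linepath 1 0)"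
    using \<open>path_image (gap m) \<union> _ \<subseteq> ?V\<close> images centre_notin_W[OF m] by blast+
  ultimately show ?thesis
    using paths ends by (simp add: rest_def winding_number_join path_image_join add.assoc)
qed

lemma winding_number_circles_loop_in:
  assumes m: "1 \<le> m" and "m \<in> S"
  shows "winding_number (circles_loop S) (centre m) = 1"
proof -
  define a b where "a = 1 / real (m + 1)" and "b = 1 / real m"
  define g where "g = circles_path S"
  let ?z = "centre m" and ?wn = "\<lambda>p. winding_number p (centre m)"
  have ab: "a \<in> {0..1}" "b \<in> {0..1}"
    using m by (auto simp: a_def b_def)
  have not_in: "?z \<notin> path_image p" if "path_image p \<subseteq> W" for p
    using centre_notin_W[OF m] that by blast
  have g_W: "path_image g \<subseteq> W" and line_W: "path_image (linepath 1 0) \<subseteq> W"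
    using path_image_circles_loop[of S] W_part_subset_W[of "S \<inter> {1..}"]
    by (auto simp: g_def circles_loop_def path_image_join)
  have "?wn (subpath a b g) = ?wn (piece S m)"
    using subpath_circles_path[OF m] unfolding a_def b_def g_def by (intro winding_number_cong) simp
  also have "\<dots> = ?wn (gap m) + 1"
  proof -
    have "path_image (gap m) \<subseteq> W" "path_image (hoop m) \<subseteq> W"
      using path_image_gap_real[OF m] path_image_hoop[of m] m unfolding W_eq_W_part W_part_def by auto
    then show ?thesis
      using \<open>m \<in> S\<close> not_in by (simp add: piece_def winding_number_join winding_number_hoop)
  qed
  finally have "?wn (subpath a b g) = ?wn (gap m) + 1" .
  moreover have "?wn g = ?wn (subpath 0 a g) + ?wn (subpath a b g) + ?wn (subpath b 1 g)"
    using ab not_in[OF g_W] path_circles_path unfolding g_def by (intro winding_number_subpath_split)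
  moreover have "?wn (circles_loop S) = ?wn g + ?wn (linepath 1 0)"
    using not_in[OF g_W] not_in[OF line_W]
    by (simp add: circles_loop_def g_def winding_number_join path_circles_path)
  ultimately show ?thesis
    using winding_number_circles_loop_without_hoop[OF m, of S]
    unfolding a_def b_def g_def by (simp add: algebra_simps)
qed

lemma winding_number_circles_loop:
  "1 \<le> m \<Longrightarrow> winding_number (circles_loop S) (centre m) = (if m \<in> S then 1 else 0)"
  by (simp add: winding_number_circles_loop_in winding_number_circles_loop_notin)

lemma hclass_circles_loop_eqD:
  assumes "hclass (circles_loop S) = hclass (circles_loop T)"
  shows "S \<inter> {1..} = T \<inter> {1..}"
proof -
  have homotopic: "homotopic_paths W (circles_loop S) (circles_loop T)"
    using assms loop_circles_loop[of T] by (auto simp: hclass_def loop_at0_def homotopic_paths_refl)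
  have "m \<in> S \<longleftrightarrow> m \<in> T" if m: "1 \<le> m" for m
  proof -
    have "W \<subseteq> - {centre m}" using centre_notin_W[OF m] by blast
    then have "winding_number (circles_loop S) (centre m) = winding_number (circles_loop T) (centre m)"
      using homotopic by (meson homotopic_paths_subset winding_number_homotopic_paths)
    then show ?thesis using winding_number_circles_loop[OF m] by (simp split: if_splits)
  qed
  then show ?thesis by auto
qed

lemma reals_lepoll_P_omega: "(UNIV :: real set) \<lesssim> P_omega"
proof -
  have "inj (\<lambda>A. hclass (circles_loop (Suc ` A)))"
  proof (rule injI)
    fix A B :: "nat set"
    assume "hclass (circles_loop (Suc ` A)) = hclass (circles_loop (Suc ` B))"
    then have "Suc ` A \<inter> {1..} = Suc ` B \<inter> {1..}" by (rule hclass_circles_loop_eqD)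
    then show "A = B" by (auto simp: inj_image_eq_iff)
  qed
  moreover have "range (\<lambda>A. hclass (circles_loop (Suc ` A))) \<subseteq> P_omega"
    unfolding P_omega_def using omega_words.gen[OF omega_loop_circles_loop] by blast
  ultimately have "(UNIV :: nat set set) \<lesssim> P_omega"
    unfolding lepoll_def by blast
  then show ?thesis
    using lepoll_trans[OF reals_lepoll_nat_sets] by blast
qed

theorem lemma12p2:
  shows "P_omega \<approx> (UNIV :: real set)"
  by (rule lepoll_antisym[OF P_omega_lepoll_reals reals_lepoll_P_omega])

end
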